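(* Let $z_1,\ldots,z_r,\zeta_1,\ldots,\zeta_{s+1}$ be orthonormal generators of $\mathrm{Cl}_{r,s+1}$ with $\langle z_i,z_i\rangle=1$, $\langle\zeta_j,\zeta_j\rangle=-1$, and let $a_1,\ldots,a_s,b_1,\ldots,b_{r+1}$ be orthonormal generators of $\mathrm{Cl}_{s,r+1}$ with $\langle a_i,a_i\rangle=1$, $\langle b_j,b_j\rangle=-1$. Let $\Phi\colon\mathrm{Cl}_{r,s+1}\to\mathrm{Cl}_{s,r+1}$ be the algebra isomorphism determined by $\Phi(z_i)=b_ib_{r+1}$ ($i=1,\ldots,r$), $\Phi(\zeta_j)=a_jb_{r+1}$ ($j=1,\ldots,s$), $\Phi(\zeta_{s+1})=b_{r+1}$. If $(V,\langle\cdot\,,\cdot\rangle_V)$ is an admissible module of $\mathrm{Cl}_{s,r+1}$ with representation $J\colon\mathrm{Cl}_{s,r+1}\to\mathrm{End}(V)$, then $V$ with the representation $J\circ\Phi\colon\mathrm{Cl}_{r,s+1}\to\mathrm{End}(V)$ and the same scalar product $\langle\cdot\,,\cdot\rangle_V$ is an admissible $\mathrm{Cl}_{r,s+1}$-module.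
   Context: A scalar product is a real symmetric non-degenerate bilinear form. $\mathbb R^{p,q}$ is $\mathbb R^{p+q}$ with quadratic form $x_1^2+\dots+x_p^2-x_{p+1}^2-\dots-x_{p+q}^2$ and $\mathrm{Cl}_{p,q}$ the Clifford algebra generated by $\mathbb R^{p,q}$ with relation $z^2=-\langle z,z\rangle\cdot1$ (so $z_i^2=-1$, $\zeta_j^2=1$, $a_i^2=-1$, $b_j^2=1$, and distinct orthonormal generators anticommute). A $\mathrm{Cl}_{p,q}$-module is a real vector space $V$ with a representation into $\mathrm{End}(V)$, and it is admissible if $V$ has a scalar product with $\langle J_zu,v\rangle_V=-\langle u,J_zv\rangle_V$ for all $z\in\mathbb R^{p,q}$, $u,v\in V$. *)

theory Defs
  imports "HOL-Analysis.Analysis"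
begin

definition scalar_product :: "('v::real_vector \<Rightarrow> 'v \<Rightarrow> real) \<Rightarrow> bool" where
  "scalar_product B \<longleftrightarrow>
     (\<forall>v. linear (\<lambda>u. B u v)) \<and> (\<forall>u. linear (\<lambda>v. B u v)) \<and>
     (\<forall>u v. B u v = B v u) \<and>
     (\<forall>u. (\<forall>v. B u v = 0) \<longrightarrow> u = 0)"

text \<open>A representation of Cl_{p,q} on V, given by the images J k of the orthonormal
  generators (indices k < p have square -1, indices p \<le> k < p+q have square +1,
  distinct generators anticommute).  By the universal property of the Clifford
  algebra these data are the same as an algebra homomorphism Cl_{p,q} \<rightarrow> End(V).\<close>
definition cl_module :: "nat \<Rightarrow> nat \<Rightarrow> (nat \<Rightarrow> 'v::real_vector \<Rightarrow> 'v) \<Rightarrow> bool" where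
  "cl_module p q J \<longleftrightarrow>
     (\<forall>k < p + q. linear (J k)) \<and>
     (\<forall>k < p. \<forall>v. J k (J k v) = - v) \<and>
     (\<forall>k. p \<le> k \<and> k < p + q \<longrightarrow> (\<forall>v. J k (J k v) = v)) \<and>
     (\<forall>i < p + q. \<forall>k < p + q. i \<noteq> k \<longrightarrow> (\<forall>v. J i (J k v) = - J k (J i v)))"

text \<open>Action of a vector z = (z_0,...,z_{p+q-1}) of R^{p,q} (coordinates w.r.t. the
  orthonormal generators).\<close>
definition cl_act :: "nat \<Rightarrow> (nat \<Rightarrow> 'v::real_vector \<Rightarrow> 'v) \<Rightarrow> (nat \<Rightarrow> real) \<Rightarrow> 'v \<Rightarrow> 'v" where
  "cl_act n J z v = (\<Sum>k<n. z k *\<^sub>R J k v)"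

definition admissible_module ::
  "nat \<Rightarrow> nat \<Rightarrow> (nat \<Rightarrow> 'v::real_vector \<Rightarrow> 'v) \<Rightarrow> ('v \<Rightarrow> 'v \<Rightarrow> real) \<Rightarrow> bool" where
  "admissible_module p q J B \<longleftrightarrow>
     cl_module p q J \<and> scalar_product B \<and>
     (\<forall>z u v. B (cl_act (p + q) J z u) v = - B u (cl_act (p + q) J z v))"

text \<open>J \<circ> \<Phi> on generators of Cl_{r,s+1}.  Indexing: in Cl_{r,s+1}, z_i = index i-1
  (i=1..r), \<zeta>_j = index r+j-1 (j=1..s+1).  In Cl_{s,r+1}, a_i = index i-1 (i=1..s),
  b_j = index s+j-1 (j=1..r+1).  \<Phi>(z_i)=b_i b_{r+1}, \<Phi>(\<zeta>_j)=a_j b_{r+1}, \<Phi>(\<zeta>_{s+1})=b_{r+1}.\<close>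
definition phi_pullback :: "nat \<Rightarrow> nat \<Rightarrow> (nat \<Rightarrow> 'v \<Rightarrow> 'v) \<Rightarrow> nat \<Rightarrow> 'v \<Rightarrow> 'v" where
  "phi_pullback r s J k =
     (if k < r then (\<lambda>v. J (s + k) (J (s + r) v))
      else if k < r + s then (\<lambda>v. J (k - r) (J (s + r) v))
      else J (s + r))"

end

theory Submission
  imports Defs
begin

text \<open>Both squares and anticommutators of the generators of \<open>Cl\<^sub>r\<^sub>,\<^sub>s\<^sub>+\<^sub>1\<close> are carried
  over by the twist \<open>A \<mapsto> A b\<^sub>r\<^sub>+\<^sub>1\<close>: since \<open>b\<^sub>r\<^sub>+\<^sub>1\<close> squares to the identity and anticommutes
  with every other generator of \<open>Cl\<^sub>s\<^sub>,\<^sub>r\<^sub>+\<^sub>1\<close>, \<open>(A b\<^sub>r\<^sub>+\<^sub>1)(C b\<^sub>r\<^sub>+\<^sub>1) = -AC\<close>, which flips the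
  sign of squares and preserves anticommutation.  Admissibility only has to be checked on
  generators, and a product of two anticommuting skew-adjoint operators is again
  skew-adjoint.\<close>

definition skew_adjoint :: "('v \<Rightarrow> 'v \<Rightarrow> real) \<Rightarrow> ('v \<Rightarrow> 'v) \<Rightarrow> bool" where
  "skew_adjoint B T \<longleftrightarrow> (\<forall>u v. B (T u) v = - B u (T v))"

lemma cl_module_anticommute:
  "\<lbrakk>cl_module p q J; i < p + q; k < p + q; i \<noteq> k\<rbrakk> \<Longrightarrow> J i (J k v) = - J k (J i v)"
  unfolding cl_module_def by blast

lemma cl_module_linear: "\<lbrakk>cl_module p q J; k < p + q\<rbrakk> \<Longrightarrow> linear (J k)"
  unfolding cl_module_def by blast

lemma cl_module_square:
  "\<lbrakk>cl_module p q J; k < p\<rbrakk> \<Longrightarrow> J k (J k v) = - v"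
  "\<lbrakk>cl_module p q J; p \<le> k; k < p + q\<rbrakk> \<Longrightarrow> J k (J k v) = v"
  unfolding cl_module_def by blast+

lemma skew_adjoint_cl_act:
  assumes sp: "scalar_product B" and gens: "\<And>k. k < n \<Longrightarrow> skew_adjoint B (J k)"
  shows "skew_adjoint B (cl_act n J z)"
  unfolding skew_adjoint_def
proof (intro allI)
  fix u v
  have l1: "linear (\<lambda>u. B u v)" and l2: "linear (\<lambda>v. B u v)"
    using sp unfolding scalar_product_def by auto
  have "B (cl_act n J z u) v = (\<Sum>k<n. z k * B (J k u) v)"
    unfolding cl_act_def by (simp add: linear_sum[OF l1, unfolded o_def] linear_scale[OF l1])
  also have "\<dots> = (\<Sum>k<n. - (z k * B u (J k v)))"
    using gens by (intro sum.cong) (auto simp: skew_adjoint_def)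
  also have "\<dots> = - B u (cl_act n J z v)"
    unfolding cl_act_def
    by (simp add: linear_sum[OF l2, unfolded o_def] linear_scale[OF l2] sum_negf)
  finally show "B (cl_act n J z u) v = - B u (cl_act n J z v)" .
qed

lemma cl_act_basis:
  assumes "k < n"
  shows "cl_act n J (\<lambda>i. if i = k then 1 else 0) = J k"
  using assms by (simp add: fun_eq_iff cl_act_def if_distrib[of "\<lambda>c. c *\<^sub>R _"] cong: if_cong)

lemma admissible_module_iff_generators:
  "admissible_module p q J B \<longleftrightarrow>
     cl_module p q J \<and> scalar_product B \<and> (\<forall>k < p + q. skew_adjoint B (J k))"
proof
  assume adm: "admissible_module p q J B"
  have "skew_adjoint B (J k)" if "k < p + q" for k
    using adm cl_act_basis[OF that, of J]
    unfolding admissible_module_def skew_adjoint_def by metis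
  with adm show "cl_module p q J \<and> scalar_product B \<and> (\<forall>k < p + q. skew_adjoint B (J k))"
    unfolding admissible_module_def by blast
next
  assume "cl_module p q J \<and> scalar_product B \<and> (\<forall>k < p + q. skew_adjoint B (J k))"
  then show "admissible_module p q J B"
    unfolding admissible_module_def using skew_adjoint_cl_act
    by (metis skew_adjoint_def)
qed

lemma skew_adjoint_compose_anticommuting:
  assumes sp: "scalar_product B" and "skew_adjoint B S" "skew_adjoint B T"
    and anti: "\<And>v. S (T v) = - T (S v)"
  shows "skew_adjoint B (S \<circ> T)"
  unfolding skew_adjoint_def
proof (intro allI)
  fix u v
  have l2: "linear (\<lambda>v. B u v)"
    using sp unfolding scalar_product_def by auto
  have "B (S (T u)) v = B u (T (S v))"
    using assms(2,3) unfolding skew_adjoint_def by simp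
  also have "\<dots> = - B u (S (T v))"
    using anti linear_neg[OF l2] by simp
  finally show "B ((S \<circ> T) u) v = - B u ((S \<circ> T) v)" by simp
qed

lemma anticommuting_involution_twist:
  assumes "linear A" and "\<And>v. E (E v) = v" and "\<And>v. E (C v) = - C (E v)"
  shows "A (E (C (E v))) = - A (C v)"
  using assms by (simp add: linear_neg)

definition phi_index :: "nat \<Rightarrow> nat \<Rightarrow> nat \<Rightarrow> nat" where
  "phi_index r s k = (if k < r then s + k else k - r)"

lemma phi_pullback_twisted:
  "k < r + s \<Longrightarrow> phi_pullback r s J k = J (phi_index r s k) \<circ> J (s + r)"
  by (auto simp: phi_pullback_def phi_index_def)

lemma phi_pullback_last: "\<not> k < r + s \<Longrightarrow> phi_pullback r s J k = J (s + r)"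
  by (simp add: phi_pullback_def)

lemma phi_index_less: "k < r + s \<Longrightarrow> phi_index r s k < s + r"
  unfolding phi_index_def by arith

lemma phi_index_inj: "\<lbrakk>i < r + s; k < r + s; phi_index r s i = phi_index r s k\<rbrakk> \<Longrightarrow> i = k"
  by (auto simp: phi_index_def split: if_splits)

lemma last_generator_square:
  "cl_module s (r + 1) J \<Longrightarrow> J (s + r) (J (s + r) v) = v"
  using cl_module_square(2)[of s "r + 1" J "s + r"] by simp

lemma last_generator_anticommute:
  assumes J: "cl_module s (r + 1) J" and "k < r + s"
  shows "J (s + r) (J (phi_index r s k) v) = - J (phi_index r s k) (J (s + r) v)"
  using phi_index_less[OF \<open>k < r + s\<close>] by (intro cl_module_anticommute[OF J]) simp_all

lemma phi_pullback_mult: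
  assumes J: "cl_module s (r + 1) J" and "i < r + s" "k < r + s"
  shows "phi_pullback r s J i (phi_pullback r s J k v)
           = - J (phi_index r s i) (J (phi_index r s k) v)"
proof -
  have "linear (J (phi_index r s i))"
    using cl_module_linear[OF J] phi_index_less[OF \<open>i < r + s\<close>] by simp
  moreover note last_generator_square[OF J]
  moreover note last_generator_anticommute[OF J \<open>k < r + s\<close>]
  ultimately have "J (phi_index r s i) (J (s + r) (J (phi_index r s k) (J (s + r) v)))
                     = - J (phi_index r s i) (J (phi_index r s k) v)"
    by (rule anticommuting_involution_twist)
  then show ?thesis
    using assms(2,3) by (simp add: phi_pullback_twisted)
qed

lemma phi_pullback_anticommute_last:
  assumes J: "cl_module s (r + 1) J" and "k < r + s"
  shows "phi_pullback r s J k (J (s + r) v) = - J (s + r) (phi_pullback r s J k v)"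
proof -
  note last_generator_square[OF J]
  moreover note last_generator_anticommute[OF J \<open>k < r + s\<close>]
  ultimately show ?thesis
    using assms(2) by (simp add: phi_pullback_twisted)
qed

lemma cl_module_phi_pullback:
  assumes J: "cl_module s (r + 1) J"
  shows "cl_module r (s + 1) (phi_pullback r s J)"
  unfolding cl_module_def
proof (intro conjI allI impI)
  fix k assume "k < r + (s + 1)"
  note lin = cl_module_linear[OF J]
  show "linear (phi_pullback r s J k)"
  proof (cases "k < r + s")
    case True
    then show ?thesis
      using linear_compose[OF lin lin] phi_index_less[OF True]
      by (simp add: phi_pullback_twisted)
  qed (simp add: phi_pullback_last lin)
next
  fix k v assume "k < r"
  then show "phi_pullback r s J k (phi_pullback r s J k v) = - v"
    using phi_pullback_mult[OF J, of k k v] cl_module_square(2)[OF J, of "s + k" v]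
    by (simp add: phi_index_def)
next
  fix k v assume k: "r \<le> k \<and> k < r + (s + 1)"
  show "phi_pullback r s J k (phi_pullback r s J k v) = v"
  proof (cases "k < r + s")
    case True
    then show ?thesis
      using k phi_pullback_mult[OF J True True, of v] cl_module_square(1)[OF J, of "k - r" v]
      by (simp add: phi_index_def)
  qed (simp add: phi_pullback_last last_generator_square[OF J])
next
  fix i k v assume "i < r + (s + 1)" "k < r + (s + 1)" "i \<noteq> k"
  then consider "i < r + s" "k < r + s" | "i < r + s" "k = r + s" | "i = r + s" "k < r + s"
    by fastforce
  then show "phi_pullback r s J i (phi_pullback r s J k v)
               = - phi_pullback r s J k (phi_pullback r s J i v)"
  proof cases
    case 1
    then have "phi_index r s i \<noteq> phi_index r s k"
      using \<open>i \<noteq> k\<close> phi_index_inj by blast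
    then have "J (phi_index r s i) (J (phi_index r s k) v)
                 = - J (phi_index r s k) (J (phi_index r s i) v)"
      using phi_index_less[OF 1(1)] phi_index_less[OF 1(2)]
      by (intro cl_module_anticommute[OF J]) simp_all
    then show ?thesis
      using 1 phi_pullback_mult[OF J] by simp
  qed (simp_all add: phi_pullback_last phi_pullback_anticommute_last[OF J])
qed

lemma skew_adjoint_phi_pullback:
  assumes "admissible_module s (r + 1) J B" and "k < r + (s + 1)"
  shows "skew_adjoint B (phi_pullback r s J k)"
proof -
  have cm: "cl_module s (r + 1) J" and sp: "scalar_product B"
    and skew: "\<And>k. k < s + (r + 1) \<Longrightarrow> skew_adjoint B (J k)"
    using assms(1) unfolding admissible_module_iff_generators by blast+
  show ?thesis
  proof (cases "k < r + s")
    case True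
    have "J (phi_index r s k) (J (s + r) v) = - J (s + r) (J (phi_index r s k) v)" for v
      using last_generator_anticommute[OF cm True] by simp
    then show ?thesis
      unfolding phi_pullback_twisted[OF True]
      using phi_index_less[OF True]
      by (intro skew_adjoint_compose_anticommuting sp skew) simp_all
  qed (simp add: phi_pullback_last skew)
qed

theorem theorem3p1:
  fixes r s :: nat and J :: "nat \<Rightarrow> 'v::real_vector \<Rightarrow> 'v" and B :: "'v \<Rightarrow> 'v \<Rightarrow> real"
  assumes "admissible_module s (r + 1) J B"
  shows "admissible_module r (s + 1) (phi_pullback r s J) B"
proof -
  have "cl_module s (r + 1) J" and "scalar_product B"
    using assms by (auto simp: admissible_module_iff_generators)
  then show ?thesis
    using cl_module_phi_pullback skew_adjoint_phi_pullback[OF assms]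
    by (simp add: admissible_module_iff_generators)
qed

end
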